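(* There exist five distinct points $p_1,\dots,p_5$ in the plane (not necessarily in general position) such that there is no family $K_1,\dots,K_5$ of pairwise intersecting compact convex sets in the plane with $o(K_iK_jK_k)=o(p_ip_jp_k)$ for all distinct $i,j,k\in\{1,\dots,5\}$.
   Context: For points $p,q,r$ in the plane, $o(pqr)\in\{+1,0,-1\}$ is $+1$ if $p,q,r$ form a counterclockwise triangle, $-1$ if clockwise, and $0$ if they are collinear. For three pairwise intersecting compact convex sets $A,B,C$ in the plane: if $A\cap B\cap C\neq\emptyset$ then $o(ABC)=0$; otherwise $o(ABC)=o(xyz)$ for any $x\in B\cap C$, $y\in A\cap C$, $z\in A\cap B$ (this orientation is known not to depend on the choice of $x,y,z$, and is nonzero). *)

theory Defs
  imports "HOL-Analysis.Analysis"
begin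

definition orient :: "real \<times> real \<Rightarrow> real \<times> real \<Rightarrow> real \<times> real \<Rightarrow> int" where
  "orient p q r =
     (let d = (fst q - fst p) * (snd r - snd p) - (snd q - snd p) * (fst r - fst p)
      in if d > 0 then 1 else if d < 0 then -1 else 0)"

text \<open>Orientation of three pairwise intersecting compact convex sets: 0 if they have a
  common point; otherwise o(xyz) for (any) x in B \<inter> C, y in A \<inter> C, z in A \<inter> B
  (the choice does not matter by a known fact; we pick some points via Hilbert choice).\<close>

definition set_orient :: "(real \<times> real) set \<Rightarrow> (real \<times> real) set \<Rightarrow> (real \<times> real) set \<Rightarrow> int" where
  "set_orient A B C =
     (if A \<inter> B \<inter> C \<noteq> {} then 0
      else orient (SOME x. x \<in> B \<inter> C) (SOME y. y \<in> A \<inter> C) (SOME z. z \<in> A \<inter> B))"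

end

theory Submission
  imports Defs
begin

text \<open>The five points form a cross: \<open>p1\<close> is the centre, \<open>p2, p3\<close> lie on a horizontal
  and \<open>p4, p5\<close> on a vertical line through it. In a realization, the collinear triples give
  points \<open>u \<in> K1 \<inter> K2 \<inter> K3\<close> and \<open>v \<in> K1 \<inter> K4 \<inter> K5\<close>, and all other triples have empty
  intersection. The orientation of such a triple is the sign of a determinant that cannot vanish
  on the (convex) pairwise intersections, so it does not depend on the chosen points. Choosing
  \<open>cij \<in> Ki \<inter> Kj\<close>, the line \<open>uv\<close> strictly separates \<open>c25, c34\<close> from \<open>c24, c35\<close>, while the
  orientations of the remaining triples, combined with convexity, force the segments
  \<open>c25 c34\<close> and \<open>c24 c35\<close> to cross.\<close>

definition det3 :: "real \<times> real \<Rightarrow> real \<times> real \<Rightarrow> real \<times> real \<Rightarrow> real" where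
  "det3 p q r = (fst q - fst p) * (snd r - snd p) - (snd q - snd p) * (fst r - fst p)"

lemma orient_det3:
  "orient p q r = (if det3 p q r > 0 then 1 else if det3 p q r < 0 then -1 else 0)"
  unfolding orient_def det3_def Let_def by simp

lemma det3_rotate: "det3 p q r = det3 q r p"
  unfolding det3_def by algebra

lemma det3_self: "det3 p q p = 0" "det3 p q q = 0"
  unfolding det3_def by simp_all

lemma det3_affine_comb:
  assumes "s + t = 1"
  shows "det3 p q (s *\<^sub>R x + t *\<^sub>R y) = s * det3 p q x + t * det3 p q y"
proof -
  have s: "s = 1 - t" using assms by simp
  show ?thesis unfolding det3_def s by (simp add: algebra_simps)
qed

text \<open>The point where the line through \<open>x\<close> and \<open>y\<close> meets the line \<open>pq\<close>; if the two lines are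
  parallel, division by zero makes it \<open>x\<close>.\<close>

definition line_crossing ::
    "real \<times> real \<Rightarrow> real \<times> real \<Rightarrow> real \<times> real \<Rightarrow> real \<times> real \<Rightarrow> real \<times> real" where
  "line_crossing p q x y =
     (let t = det3 p q x / (det3 p q x - det3 p q y) in (1 - t) *\<^sub>R x + t *\<^sub>R y)"

lemma det3_line_crossing:
  "det3 p' q' (line_crossing p q x y) =
     (let t = det3 p q x / (det3 p q x - det3 p q y) in (1 - t) * det3 p' q' x + t * det3 p' q' y)"
  unfolding line_crossing_def Let_def by (simp add: det3_affine_comb)

lemma det3_line_crossing_eq_0:
  assumes "det3 p q x \<noteq> det3 p q y"
  shows "det3 p q (line_crossing p q x y) = 0"
  using assms unfolding det3_line_crossing Let_def by (simp add: field_simps)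

lemma line_crossing_mem_convex:
  assumes "convex S" "x \<in> S" "y \<in> S" "det3 p q x * det3 p q y < 0"
  shows "line_crossing p q x y \<in> S"
proof -
  define t where "t = det3 p q x / (det3 p q x - det3 p q y)"
  have "0 \<le> t \<and> t \<le> 1"
    using assms(4) unfolding t_def mult_less_0_iff by (auto simp: divide_simps)
  then show ?thesis
    using assms(1-3) unfolding line_crossing_def t_def[symmetric] Let_def by (simp add: convex_alt)
qed

lemma line_crossing_comm:
  assumes "det3 p q x \<noteq> det3 p q y" "det3 x y p \<noteq> det3 x y q"
  shows "line_crossing p q x y = line_crossing x y p q"
proof -
  have "det3 p q x - det3 p q y \<noteq> 0" "det3 x y p - det3 x y q \<noteq> 0"
    using assms by simp_all
  then show ?thesis
    unfolding line_crossing_def Let_def prod_eq_iff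
    by (simp add: field_simps) (simp add: det3_def algebra_simps)
qed

lemma collinear_if_det3_eq_0:
  assumes "det3 x y z = 0"
  shows "collinear {x, y, z}"
proof (cases "y = x")
  case True
  then show ?thesis by simp
next
  case False
  define a1 where "a1 = fst y - fst x"
  define a2 where "a2 = snd y - snd x"
  define b1 where "b1 = fst z - fst x"
  define b2 where "b2 = snd z - snd x"
  define d where "d = a1\<^sup>2 + a2\<^sup>2"
  define t where "t = (a1 * b1 + a2 * b2) / d"
  have "d \<noteq> 0"
    using False by (simp add: a1_def a2_def d_def prod_eq_iff sum_power2_eq_zero_iff)
  have "a1 * b2 = a2 * b1" "t * d = a1 * b1 + a2 * b2"
    using assms \<open>d \<noteq> 0\<close> by (simp_all add: a1_def a2_def b1_def b2_def t_def det3_def)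
  then have "(b1 - t * a1) * d = 0" "(b2 - t * a2) * d = 0"
    unfolding d_def power2_eq_square by algebra+
  then have "fst z = fst x + t * a1" "snd z = snd x + t * a2"
    using \<open>d \<noteq> 0\<close> by (simp_all add: b1_def b2_def)
  then have "\<forall>w\<in>{x, y, z}. \<exists>c. w = x + c *\<^sub>R (y - x)"
    using a1_def a2_def by (auto simp: prod_eq_iff intro: exI[of _ 0] exI[of _ 1] exI[of _ t])
  then show ?thesis unfolding collinear_alt by blast
qed

lemma det3_ne_0_if_no_common_point:
  assumes "convex A" "convex B" "convex C" "A \<inter> B \<inter> C = {}"
    and "x \<in> B \<inter> C" "y \<in> A \<inter> C" "z \<in> A \<inter> B"
  shows "det3 x y z \<noteq> 0"
proof
  assume "det3 x y z = 0"
  then have "between (y, z) x \<or> between (z, x) y \<or> between (x, y) z"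
    unfolding collinear_between_cases[symmetric] by (rule collinear_if_det3_eq_0)
  then consider "x \<in> closed_segment y z" | "y \<in> closed_segment z x" | "z \<in> closed_segment x y"
    unfolding between_mem_segment by blast
  then show False
  proof cases
    case 1
    with assms(1,6,7) have "x \<in> A" by (meson IntD1 closed_segment_subset subsetD)
    with assms(4,5) show False by blast
  next
    case 2
    with assms(2,5,7) have "y \<in> B" by (meson IntD1 IntD2 closed_segment_subset subsetD)
    with assms(4,6) show False by blast
  next
    case 3
    with assms(3,5,6) have "z \<in> C" by (meson IntD2 closed_segment_subset subsetD)
    with assms(4,7) show False by blast
  qed
qed

lemma det3_pos_iff_on_convex:
  assumes "convex S" "x \<in> S" "y \<in> S" "\<And>w. w \<in> S \<Longrightarrow> det3 p q w \<noteq> 0"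
  shows "det3 p q x > 0 \<longleftrightarrow> det3 p q y > 0"
proof -
  have opposite: False if "x' \<in> S" "y' \<in> S" "det3 p q x' > 0" "det3 p q y' < 0" for x' y'
  proof -
    have "det3 p q x' * det3 p q y' < 0"
      using that(3,4) by (simp add: mult_pos_neg)
    with assms(1) that(1,2) have "line_crossing p q x' y' \<in> S"
      by (rule line_crossing_mem_convex)
    moreover have "det3 p q (line_crossing p q x' y') = 0"
      using that(3,4) by (intro det3_line_crossing_eq_0) simp
    ultimately show False
      using assms(4) by blast
  qed
  have "det3 p q x \<noteq> 0" "det3 p q y \<noteq> 0"
    using assms(2-4) by auto
  then show ?thesis
    using opposite[OF assms(2,3)] opposite[OF assms(3,2)] by (auto simp: linorder_neq_iff)
qed

lemma set_orient_eq_orient: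
  assumes "convex A" "convex B" "convex C" "A \<inter> B \<inter> C = {}"
    and "x \<in> B \<inter> C" "y \<in> A \<inter> C" "z \<in> A \<inter> B"
  shows "set_orient A B C = orient x y z"
proof -
  define x0 where "x0 = (SOME x. x \<in> B \<inter> C)"
  define y0 where "y0 = (SOME y. y \<in> A \<inter> C)"
  define z0 where "z0 = (SOME z. z \<in> A \<inter> B)"
  have x0: "x0 \<in> B \<inter> C" and y0: "y0 \<in> A \<inter> C" and z0: "z0 \<in> A \<inter> B"
    unfolding x0_def y0_def z0_def using assms(5-7) by (metis someI)+
  have ne: "det3 x' y' z' \<noteq> 0" if "x' \<in> B \<inter> C" "y' \<in> A \<inter> C" "z' \<in> A \<inter> B" for x' y' z'
    using det3_ne_0_if_no_common_point[OF assms(1-4) that] .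
  have convex: "convex (B \<inter> C)" "convex (A \<inter> C)" "convex (A \<inter> B)"
    using assms(1-3) by (simp_all add: convex_Int)
  have "det3 x0 y0 z0 > 0 \<longleftrightarrow> det3 x y0 z0 > 0"
    using det3_pos_iff_on_convex[OF convex(1) x0 assms(5), of y0 z0] ne[OF _ y0 z0]
    by (simp add: det3_rotate[of _ y0 z0])
  also have "\<dots> \<longleftrightarrow> det3 x y z0 > 0"
    using det3_pos_iff_on_convex[OF convex(2) y0 assms(6), of z0 x] ne[OF assms(5) _ z0]
    by (simp add: det3_rotate[of z0 x, symmetric])
  also have "\<dots> \<longleftrightarrow> det3 x y z > 0"
    using det3_pos_iff_on_convex[OF convex(3) z0 assms(7), of x y] ne[OF assms(5,6)] by simp
  finally have "det3 x0 y0 z0 > 0 \<longleftrightarrow> det3 x y z > 0" .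
  moreover have "set_orient A B C = orient x0 y0 z0"
    unfolding set_orient_def x0_def y0_def z0_def using assms(4) by simp
  ultimately show ?thesis
    using ne[OF x0 y0 z0] ne[OF assms(5-7)] unfolding orient_det3 by (auto simp: linorder_neq_iff)
qed

lemma common_point_if_set_orient_eq_0:
  assumes "convex A" "convex B" "convex C" "A \<inter> B \<noteq> {}" "A \<inter> C \<noteq> {}" "B \<inter> C \<noteq> {}"
    and "set_orient A B C = 0"
  shows "A \<inter> B \<inter> C \<noteq> {}"
proof
  assume empty: "A \<inter> B \<inter> C = {}"
  obtain x y z where x: "x \<in> B \<inter> C" and y: "y \<in> A \<inter> C" and z: "z \<in> A \<inter> B"
    using assms(4-6) by blast
  have "set_orient A B C = orient x y z"
    using set_orient_eq_orient[OF assms(1-3) empty x y z] .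
  moreover have "det3 x y z \<noteq> 0"
    using det3_ne_0_if_no_common_point[OF assms(1-3) empty x y z] .
  ultimately show False
    using assms(7) by (simp add: orient_det3 split: if_splits)
qed

lemma no_common_point_if_set_orient_ne_0: "set_orient A B C \<noteq> 0 \<Longrightarrow> A \<inter> B \<inter> C = {}"
  unfolding set_orient_def by (simp split: if_splits)

lemma det3_pos_if_set_orient_eq_1:
  assumes "convex A" "convex B" "convex C" "set_orient A B C = 1"
    and "x \<in> B \<inter> C" "y \<in> A \<inter> C" "z \<in> A \<inter> B"
  shows "det3 x y z > 0"
proof -
  have "A \<inter> B \<inter> C = {}"
    using assms(4) by (simp add: no_common_point_if_set_orient_ne_0)
  then show ?thesis
    using set_orient_eq_orient[OF assms(1-3) _ assms(5-7)] assms(4)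
    by (simp add: orient_det3 split: if_splits)
qed

lemma det3_neg_if_set_orient_eq_neg1:
  assumes "convex A" "convex B" "convex C" "set_orient A B C = -1"
    and "x \<in> B \<inter> C" "y \<in> A \<inter> C" "z \<in> A \<inter> B"
  shows "det3 x y z < 0"
proof -
  have "A \<inter> B \<inter> C = {}"
    using assms(4) by (simp add: no_common_point_if_set_orient_ne_0)
  then show ?thesis
    using set_orient_eq_orient[OF assms(1-3) _ assms(5-7)] assms(4)
    by (simp add: orient_det3 split: if_splits)
qed

lemma in_convex_hull_3_if_det3_nonneg:
  assumes "det3 a b c > 0" "det3 a b p \<ge> 0" "det3 b c p \<ge> 0" "det3 c a p \<ge> 0"
  shows "p \<in> convex hull {a, b, c}"
proof -
  let ?d = "det3 a b c"
  have "det3 b c p + det3 c a p + det3 a b p = ?d"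
    unfolding det3_def by algebra
  moreover have "?d * fst p = det3 b c p * fst a + det3 c a p * fst b + det3 a b p * fst c"
    "?d * snd p = det3 b c p * snd a + det3 c a p * snd b + det3 a b p * snd c"
    unfolding det3_def by algebra+
  ultimately have "p = (det3 b c p / ?d) *\<^sub>R a + (det3 c a p / ?d) *\<^sub>R b + (det3 a b p / ?d) *\<^sub>R c"
    and "det3 b c p / ?d + det3 c a p / ?d + det3 a b p / ?d = 1"
    using assms(1) by (simp_all add: prod_eq_iff field_simps)
  then show ?thesis
    unfolding convex_hull_3 using assms by fastforce
qed

lemma line_crossing_mem_triangle:
  assumes "det3 u v b < 0" "det3 u v a1 > 0" "det3 u v a2 > 0"
    and "det3 b a2 u > 0" "det3 b a1 a2 \<ge> 0"
  shows "line_crossing u v b a2 \<in> convex hull {b, a1, u}"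
proof -
  define X where "X = line_crossing u v b a2"
  define t where "t = det3 u v b / (det3 u v b - det3 u v a2)"
  have t: "0 < t" "t < 1"
    using assms(1,3) by (simp_all add: t_def divide_simps)
  have det3_X: "det3 p q X = (1 - t) * det3 p q b + t * det3 p q a2" for p q
    unfolding X_def det3_line_crossing t_def Let_def ..
  have "det3 b a1 u * (det3 u v a2 - det3 u v b)
          = (det3 u v a1 - det3 u v b) * det3 b a2 u + - det3 u v b * det3 b a1 a2"
    unfolding det3_def by algebra
  also have "\<dots> > 0"
    using assms by (intro add_pos_nonneg mult_nonneg_nonneg mult_pos_pos) auto
  finally have "det3 b a1 u > 0"
    using assms(1,3) zero_less_mult_pos2[of "det3 b a1 u"] by fastforce
  have "1 - t = det3 u v a2 / (det3 u v a2 - det3 u v b)"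
    "t = - det3 u v b / (det3 u v a2 - det3 u v b)"
    using assms(1,3) by (simp_all add: t_def divide_simps algebra_simps)
  then have "(1 - t) * det3 a1 u b + t * det3 a1 u a2
        = (det3 u v a2 * det3 a1 u b - det3 u v b * det3 a1 u a2) / (det3 u v a2 - det3 u v b)"
    by (simp add: diff_divide_distrib)
  also have "\<dots> = det3 u v a1 * det3 b a2 u / (det3 u v a2 - det3 u v b)"
    unfolding det3_def by algebra
  finally have "det3 a1 u X > 0"
    using assms unfolding det3_X by simp
  moreover have "det3 b a1 X \<ge> 0" "det3 u b X > 0"
    using t assms(4,5) unfolding det3_X by (simp_all add: det3_self det3_rotate[of u b a2])
  ultimately show ?thesis
    unfolding X_def[symmetric] using \<open>det3 b a1 u > 0\<close>
    by (intro in_convex_hull_3_if_det3_nonneg) auto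
qed

text \<open>If the inequality failed, the point where the segment from \<open>b\<close> to \<open>a2\<close> (inside \<open>B\<close>)
  crosses the line \<open>uv\<close> would lie on the segment from \<open>u\<close> to \<open>v\<close> (inside \<open>C\<close>) and in the
  triangle \<open>b a1 u\<close> (inside \<open>A\<close>).\<close>

lemma det3_neg_if_no_common_point:
  assumes "convex A" "convex B" "convex C" "A \<inter> B \<inter> C = {}"
    and "u \<in> A \<inter> C" "v \<in> B \<inter> C" "b \<in> A \<inter> B" "a1 \<in> A" "a2 \<in> B"
    and "det3 u v b < 0" "det3 u v a1 > 0" "det3 u v a2 > 0"
    and "det3 v a1 b > 0" "det3 u a2 b < 0"
  shows "det3 b a1 a2 < 0"
proof (rule ccontr)
  assume "\<not> ?thesis"
  then have nonneg: "det3 b a1 a2 \<ge> 0" by simp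
  have "det3 b a2 u > 0"
    using assms(14) by (simp add: det3_def algebra_simps)
  have "- det3 b a2 v * (det3 u v a1 - det3 u v b)
          = - det3 u v b * det3 b a1 a2 + (det3 u v a2 - det3 u v b) * det3 v a1 b"
    unfolding det3_def by algebra
  also have "\<dots> > 0"
    using nonneg assms(10,12,13) by (intro add_nonneg_pos mult_nonneg_nonneg mult_pos_pos) auto
  finally have "det3 b a2 v < 0"
    using assms(10,11) zero_less_mult_pos2[of "- det3 b a2 v"] by fastforce
  define X where "X = line_crossing u v b a2"
  have "X \<in> B"
    unfolding X_def using assms(2,7,9,10,12)
    by (intro line_crossing_mem_convex) (auto simp: mult_neg_pos)
  moreover have "X = line_crossing b a2 u v"
    unfolding X_def using assms(10,12) \<open>det3 b a2 u > 0\<close> \<open>det3 b a2 v < 0\<close>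
    by (intro line_crossing_comm) auto
  then have "X \<in> C"
    using assms(3,5,6) \<open>det3 b a2 u > 0\<close> \<open>det3 b a2 v < 0\<close>
    by (auto intro: line_crossing_mem_convex simp: mult_pos_neg)
  moreover have "X \<in> convex hull {b, a1, u}"
    unfolding X_def using assms(10-12) \<open>det3 b a2 u > 0\<close> nonneg
    by (rule line_crossing_mem_triangle)
  then have "X \<in> A"
    using assms(1,5,7,8) hull_minimal[of "{b, a1, u}" A convex] by auto
  ultimately show False
    using assms(4) by blast
qed

text \<open>The last four hypotheses say that the segments \<open>a1 a2\<close> and \<open>b1 b2\<close> cross, which is
  impossible as the line \<open>uv\<close> strictly separates them.\<close>

lemma separated_segments_not_crossing:
  assumes "det3 u v a1 > 0" "det3 u v a2 > 0" "det3 u v b1 < 0" "det3 u v b2 < 0"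
    and "det3 b1 a1 a2 < 0" "det3 b2 a2 a1 < 0" "det3 a1 b2 b1 < 0" "det3 a2 b1 b2 < 0"
  shows False
proof -
  have "(- det3 a2 b1 b2) * det3 u v a1 + (- det3 a1 b2 b1) * det3 u v a2
        = (- det3 b2 a2 a1) * det3 u v b1 + (- det3 b1 a1 a2) * det3 u v b2"
    unfolding det3_def by algebra
  moreover have "(- det3 a2 b1 b2) * det3 u v a1 + (- det3 a1 b2 b1) * det3 u v a2 > 0"
    using assms by (intro add_pos_pos mult_pos_pos) auto
  moreover have "(- det3 b2 a2 a1) * det3 u v b1 + (- det3 b1 a1 a2) * det3 u v b2 < 0"
    using assms by (intro add_neg_neg mult_pos_neg) auto
  ultimately show False by linarith
qed

lemma cross_orientation_table_not_realizable:
  assumes convex: "convex K1" "convex K2" "convex K3" "convex K4" "convex K5"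
    and meet: "K1 \<inter> K2 \<noteq> {}" "K1 \<inter> K3 \<noteq> {}" "K1 \<inter> K4 \<noteq> {}" "K1 \<inter> K5 \<noteq> {}"
      "K2 \<inter> K3 \<noteq> {}" "K2 \<inter> K4 \<noteq> {}" "K2 \<inter> K5 \<noteq> {}" "K3 \<inter> K4 \<noteq> {}"
      "K3 \<inter> K5 \<noteq> {}" "K4 \<inter> K5 \<noteq> {}"
    and o123: "set_orient K1 K2 K3 = 0" and o145: "set_orient K1 K4 K5 = 0"
    and o124: "set_orient K1 K2 K4 = 1" and o125: "set_orient K1 K2 K5 = -1"
    and o134: "set_orient K1 K3 K4 = -1" and o135: "set_orient K1 K3 K5 = 1"
    and o234: "set_orient K2 K3 K4 = -1" and o235: "set_orient K2 K3 K5 = 1"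
    and o245: "set_orient K2 K4 K5 = 1" and o345: "set_orient K3 K4 K5 = -1"
  shows False
proof -
  obtain u where u: "u \<in> K1" "u \<in> K2" "u \<in> K3"
    using common_point_if_set_orient_eq_0[OF convex(1-3) meet(1,2,5) o123] by blast
  obtain v where v: "v \<in> K1" "v \<in> K4" "v \<in> K5"
    using common_point_if_set_orient_eq_0[OF convex(1,4,5) meet(3,4,10) o145] by blast
  obtain c24 c25 c34 c35 where c24: "c24 \<in> K2 \<inter> K4" and c25: "c25 \<in> K2 \<inter> K5"
    and c34: "c34 \<in> K3 \<inter> K4" and c35: "c35 \<in> K3 \<inter> K5"
    using meet(6-9) by blast
  have "det3 c24 v u > 0" "det3 c35 v u > 0" "det3 c25 v u < 0" "det3 c34 v u < 0"
    using det3_pos_if_set_orient_eq_1[OF convex(1,2,4) o124, of c24 v u]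
      det3_pos_if_set_orient_eq_1[OF convex(1,3,5) o135, of c35 v u]
      det3_neg_if_set_orient_eq_neg1[OF convex(1,2,5) o125, of c25 v u]
      det3_neg_if_set_orient_eq_neg1[OF convex(1,3,4) o134, of c34 v u] u v c24 c25 c34 c35
    by auto
  then have uv: "det3 u v c24 < 0" "det3 u v c35 < 0" "det3 u v c25 > 0" "det3 u v c34 > 0"
    and vu: "det3 v u c24 > 0" "det3 v u c35 > 0" "det3 v u c25 < 0" "det3 v u c34 < 0"
    by (simp_all add: det3_def algebra_simps)
  have "det3 c34 c24 u < 0" "det3 c35 c25 u > 0" "det3 v c25 c24 > 0" "det3 v c35 c34 < 0"
    using det3_neg_if_set_orient_eq_neg1[OF convex(2-4) o234, of c34 c24 u]
      det3_pos_if_set_orient_eq_1[OF convex(2,3,5) o235, of c35 c25 u]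
      det3_pos_if_set_orient_eq_1[OF convex(2,4,5) o245, of v c25 c24]
      det3_neg_if_set_orient_eq_neg1[OF convex(3-5) o345, of v c35 c34] u v c24 c25 c34 c35
    by auto
  then have u_34_24: "det3 u c34 c24 < 0" and u_24_34: "det3 u c24 c34 > 0"
    and u_25_35: "det3 u c25 c35 < 0" and u_35_25: "det3 u c35 c25 > 0"
    and v_25_24: "det3 v c25 c24 > 0" and v_24_25: "det3 v c24 c25 < 0"
    and v_35_34: "det3 v c35 c34 < 0" and v_34_35: "det3 v c34 c35 > 0"
    by (simp_all add: det3_def algebra_simps)
  have "K1 \<inter> K2 \<inter> K4 = {}" "K1 \<inter> K2 \<inter> K5 = {}" "K1 \<inter> K3 \<inter> K4 = {}" "K1 \<inter> K3 \<inter> K5 = {}"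
    using o124 o125 o134 o135 by (simp_all add: no_common_point_if_set_orient_ne_0)
  then have empty: "K2 \<inter> K4 \<inter> K1 = {}" "K5 \<inter> K2 \<inter> K1 = {}" "K4 \<inter> K3 \<inter> K1 = {}"
    "K3 \<inter> K5 \<inter> K1 = {}"
    by blast+
  have "det3 c24 c25 c34 < 0"
    by (rule det3_neg_if_no_common_point[OF convex(2,4,1) empty(1)])
      (use u v c24 c25 c34 uv v_25_24 u_34_24 in auto)
  moreover have "det3 c35 c34 c25 < 0"
    by (rule det3_neg_if_no_common_point[OF convex(3,5,1) empty(4)])
      (use u v c35 c34 c25 uv v_34_35 u_25_35 in auto)
  moreover have "det3 c25 c35 c24 < 0"
    by (rule det3_neg_if_no_common_point[OF convex(5,2,1) empty(2)])
      (use u v c25 c35 c24 vu u_35_25 v_24_25 in auto)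
  moreover have "det3 c34 c24 c35 < 0"
    by (rule det3_neg_if_no_common_point[OF convex(4,3,1) empty(3)])
      (use u v c34 c24 c35 vu u_24_34 v_35_34 in auto)
  ultimately show False
    using separated_segments_not_crossing[OF uv(3,4,1,2)] by blast
qed

definition cross_point :: "nat \<Rightarrow> real \<times> real" where
  "cross_point i =
     (if i = 1 then (0, 0) else if i = 2 then (1, 0) else if i = 3 then (-1, 0)
      else if i = 4 then (0, 1) else (0, -1))"

lemma inj_on_cross_point: "inj_on cross_point {1..5}"
  by (rule inj_onI) (auto simp: cross_point_def prod_eq_iff split: if_splits)

lemma cross_point_orientations_not_realizable:
  fixes K :: "nat \<Rightarrow> (real \<times> real) set"
  assumes "\<forall>i\<in>{1..5}. convex (K i)"
    and "\<forall>i\<in>{1..5}. \<forall>j\<in>{1..5}. i \<noteq> j \<longrightarrow> K i \<inter> K j \<noteq> {}"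
    and "\<forall>i\<in>{1..5}. \<forall>j\<in>{1..5}. \<forall>k\<in>{1..5}. i \<noteq> j \<and> j \<noteq> k \<and> i \<noteq> k \<longrightarrow>
           set_orient (K i) (K j) (K k) = orient (cross_point i) (cross_point j) (cross_point k)"
  shows False
  by (rule cross_orientation_table_not_realizable[of "K 1" "K 2" "K 3" "K 4" "K 5"])
    (simp_all add: assms[rule_format] cross_point_def orient_def)

theorem theorem2:
  shows "\<exists>p :: nat \<Rightarrow> real \<times> real. inj_on p {1..5} \<and>
    \<not> (\<exists>K :: nat \<Rightarrow> (real \<times> real) set.
          (\<forall>i\<in>{1..5}. compact (K i) \<and> convex (K i)) \<and>
          (\<forall>i\<in>{1..5}. \<forall>j\<in>{1..5}. i \<noteq> j \<longrightarrow> K i \<inter> K j \<noteq> {}) \<and>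
          (\<forall>i\<in>{1..5}. \<forall>j\<in>{1..5}. \<forall>k\<in>{1..5}.
             i \<noteq> j \<and> j \<noteq> k \<and> i \<noteq> k \<longrightarrow>
             set_orient (K i) (K j) (K k) = orient (p i) (p j) (p k)))"
  apply (intro exI[of _ cross_point] conjI inj_on_cross_point notI, elim exE conjE)
  subgoal for K
    by (rule cross_point_orientations_not_realizable[of K]) auto
  done

end
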